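(* Let $\beta>-1$, $z>0$, and let $p_n(x;z)$ be the orthonormal polynomials with respect to the generalized Charlier weight $\omega(k)=z^k/((\beta+1)_k\,k!)$ on $\mathbb{N}$, with recurrence $xp_n=a_{n+1}p_{n+1}+b_np_n+a_np_{n-1}$, $p_{-1}=0$, $p_0=1$ (normalized). Then $$a_n^2(z)=\Big(z\frac{d}{dz}\Big)^2\ln\Delta_n(z;\beta),\qquad b_n(z)=z\frac{d}{dz}\ln\frac{\Delta_{n+1}(z;\beta)}{\Delta_n(z;\beta)},$$ where $\Delta_n(z;\beta)=\big[\Gamma(\beta+1)\big]^n\,\mathcal{W}_n\big(z^{-\beta/2}I_\beta(2\sqrt z)\big)$.
   Context: $(\beta+1)_k$ is the Pochhammer symbol; $I_\beta$ the modified Bessel function; $\delta_z= z\,\frac{d}{dz}$; $\mathcal{W}_n(\psi)=\det[\delta_z^{\,j+k}\psi]_{j,k=0}^{n-1}$, $\mathcal{W}_0=1$. *)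

theory Defs
  imports "HOL-Analysis.Analysis" "Jordan_Normal_Form.Determinant"
begin

definition besselI :: "real \<Rightarrow> real \<Rightarrow> real" where
  "besselI \<beta> x = (\<Sum>k. (x / 2) powr (2 * real k + \<beta>) / (fact k * Gamma (real k + \<beta> + 1)))"

definition euler_op :: "(real \<Rightarrow> real) \<Rightarrow> (real \<Rightarrow> real)" where
  "euler_op f = (\<lambda>z. z * deriv f z)"

definition Wdet :: "nat \<Rightarrow> (real \<Rightarrow> real) \<Rightarrow> real \<Rightarrow> real" where
  "Wdet n \<psi> z = det (mat n n (\<lambda>(j, k). (euler_op ^^ (j + k)) \<psi> z))"

definition charlier_weight :: "real \<Rightarrow> real \<Rightarrow> nat \<Rightarrow> real" where
  "charlier_weight \<beta> z k = z ^ k / (pochhammer (\<beta> + 1) k * fact k)"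

definition Delta :: "nat \<Rightarrow> real \<Rightarrow> real \<Rightarrow> real" where
  "Delta n \<beta> z = Gamma (\<beta> + 1) ^ n *
     Wdet n (\<lambda>w. w powr (-\<beta> / 2) * besselI \<beta> (2 * sqrt w)) z"

end

theory Submission
  imports Defs
begin

text \<open>
  The moments \<open>\<mu>\<^sub>j(z) = \<Sum>\<^sub>k k\<^sup>j \<omega>(k)\<close> satisfy \<open>\<delta> \<mu>\<^sub>j = \<mu>\<^sub>j\<^sub>+\<^sub>1\<close> and
  \<open>z\<^sup>-\<^sup>\<beta>\<^sup>/\<^sup>2 I\<^sub>\<beta>(2\<surd>z) = \<mu>\<^sub>0(z) / \<Gamma>(\<beta>+1)\<close>, so \<open>\<Delta>\<^sub>n\<close> is the Hankel determinant
  \<open>det[\<mu>\<^sub>i\<^sub>+\<^sub>j]\<close>. By orthonormality this equals \<open>\<Prod>\<^sub>i\<^sub><\<^sub>n h\<^sub>i\<close>, where \<open>h\<^sub>i = \<langle>\<pi>\<^sub>i, \<pi>\<^sub>i\<rangle>\<close> are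
  the squared norms of the monic orthogonal polynomials \<open>\<pi>\<^sub>i\<close>.

  Differentiate inner products of the \<open>\<pi>\<^sub>i\<close> in \<open>z\<close>: \<open>\<partial>\<^sub>z \<pi>\<^sub>n\<close> has degree below \<open>n\<close>, and
  \<open>\<delta>\<close> acting on the weight multiplies it by \<open>x\<close>. From \<open>h\<^sub>n = \<langle>\<pi>\<^sub>n, \<pi>\<^sub>n\<rangle>\<close> this gives
  \<open>\<delta> ln h\<^sub>n = \<langle>x\<pi>\<^sub>n, \<pi>\<^sub>n\<rangle> / h\<^sub>n = b\<^sub>n = s\<^sub>n - s\<^sub>n\<^sub>+\<^sub>1\<close>, with \<open>s\<^sub>n\<close> the coefficient of
  \<open>x\<^sup>n\<^sup>-\<^sup>1\<close> in \<open>\<pi>\<^sub>n\<close>; from \<open>\<langle>\<pi>\<^sub>n\<^sub>+\<^sub>1, \<pi>\<^sub>n\<rangle> = 0\<close> it gives \<open>\<delta> s\<^sub>n\<^sub>+\<^sub>1 = -h\<^sub>n\<^sub>+\<^sub>1 / h\<^sub>n\<close>.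
  Hence \<open>\<delta> ln \<Delta>\<^sub>n = \<Sum>\<^sub>i\<^sub><\<^sub>n b\<^sub>i = -s\<^sub>n\<close> telescopes and \<open>\<delta>\<^sup>2 ln \<Delta>\<^sub>n = h\<^sub>n / h\<^sub>n\<^sub>-\<^sub>1 = a\<^sub>n\<^sup>2\<close>.
\<close>

definition charlier_coeff :: "real \<Rightarrow> nat \<Rightarrow> real" where
  "charlier_coeff \<beta> k = 1 / (pochhammer (\<beta> + 1) k * fact k)"

lemma charlier_coeff_pos: "\<beta> > -1 \<Longrightarrow> charlier_coeff \<beta> k > 0"
  unfolding charlier_coeff_def by (intro divide_pos_pos mult_pos_pos pochhammer_pos) auto

lemma charlier_coeff_Suc:
  "charlier_coeff \<beta> (Suc k) = charlier_coeff \<beta> k / ((\<beta> + 1 + real k) * (real k + 1))"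
  unfolding charlier_coeff_def by (simp add: pochhammer_Suc field_simps)

lemma charlier_weight_eq: "charlier_weight \<beta> z k = charlier_coeff \<beta> k * z ^ k"
  unfolding charlier_weight_def charlier_coeff_def by simp

lemma summable_charlier_series:
  assumes \<beta>: "\<beta> > -1"
  shows "summable (\<lambda>k. charlier_coeff \<beta> k * y ^ k)"
proof (rule summable_ratio_test[where c = "1/2" and N = "nat \<lceil>2 * \<bar>y\<bar>\<rceil> + 1"])
  fix k assume "nat \<lceil>2 * \<bar>y\<bar>\<rceil> + 1 \<le> k"
  hence k: "real k \<ge> 1" "2 * \<bar>y\<bar> \<le> real k + 1" by linarith+
  define D where "D = (\<beta> + 1 + real k) * (real k + 1)"
  have c: "charlier_coeff \<beta> k > 0" using charlier_coeff_pos[OF \<beta>] .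
  have D: "real k + 1 \<le> D"
    using mult_right_mono[of 1 "\<beta> + 1 + real k" "real k + 1"] \<beta> k by (simp add: D_def)
  have "\<bar>y\<bar> / D \<le> 1 / 2"
    using D k by (subst pos_divide_le_eq) linarith+
  hence "charlier_coeff \<beta> k * \<bar>y\<bar> ^ k * (\<bar>y\<bar> / D) \<le> charlier_coeff \<beta> k * \<bar>y\<bar> ^ k * (1 / 2)"
    using c by (intro mult_left_mono) auto
  moreover have "norm (charlier_coeff \<beta> (Suc k) * y ^ Suc k) = charlier_coeff \<beta> k * \<bar>y\<bar> ^ k * (\<bar>y\<bar> / D)"
    using c D k by (simp add: charlier_coeff_Suc D_def[symmetric] abs_mult power_abs)
  ultimately show "norm (charlier_coeff \<beta> (Suc k) * y ^ Suc k) \<le> 1 / 2 * norm (charlier_coeff \<beta> k * y ^ k)"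
    using c by (simp add: abs_mult power_abs)
qed simp

lemma sums_index_mult_power_series:
  fixes c :: "nat \<Rightarrow> real"
  assumes "\<And>y. summable (\<lambda>k. c k * y ^ k)"
  shows "(\<lambda>k. (real k * c k) * z ^ k) sums (z * (\<Sum>k. diffs c k * z ^ k))"
proof -
  have "(\<lambda>k. z * (diffs c k * z ^ k)) sums (z * (\<Sum>k. diffs c k * z ^ k))"
    by (intro sums_mult summable_sums termdiff_converges_all assms)
  moreover have "(\<lambda>k. z * (diffs c k * z ^ k)) = (\<lambda>k. (real (Suc k) * c (Suc k)) * z ^ Suc k)"
    by (auto simp: diffs_def algebra_simps)
  ultimately show ?thesis
    using sums_Suc_iff[of "\<lambda>k. (real k * c k) * z ^ k"] by simp
qed

lemma has_real_derivative_entire_power_series: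
  fixes c :: "nat \<Rightarrow> real"
  assumes "\<And>y. summable (\<lambda>k. c k * y ^ k)" and "z \<noteq> 0"
  shows "((\<lambda>x. \<Sum>k. c k * x ^ k) has_real_derivative (\<Sum>k. (real k * c k) * z ^ k) / z) (at z)"
  using termdiffs_strong_converges_everywhere[OF assms(1)] assms(2)
  by (simp add: sums_unique[OF sums_index_mult_power_series[OF assms(1)], symmetric])

definition charlier_moment :: "real \<Rightarrow> nat \<Rightarrow> real \<Rightarrow> real" where
  "charlier_moment \<beta> j z = (\<Sum>k. (real k ^ j * charlier_coeff \<beta> k) * z ^ k)"

lemma summable_charlier_moment:
  assumes "\<beta> > -1"
  shows "summable (\<lambda>k. (real k ^ j * charlier_coeff \<beta> k) * y ^ k)"
proof (induction j arbitrary: y)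
  case 0
  show ?case using summable_charlier_series[OF assms] by simp
next
  case (Suc j)
  show ?case
    using sums_summable[OF sums_index_mult_power_series[OF Suc.IH]] by (simp add: mult.assoc)
qed

lemma charlier_moment_sums:
  "\<beta> > -1 \<Longrightarrow> (\<lambda>k. (real k ^ j * charlier_coeff \<beta> k) * z ^ k) sums charlier_moment \<beta> j z"
  unfolding charlier_moment_def by (intro summable_sums summable_charlier_moment)

lemma charlier_moment_has_derivative:
  assumes "\<beta> > -1" and "z \<noteq> 0"
  shows "(charlier_moment \<beta> j has_real_derivative charlier_moment \<beta> (Suc j) z / z) (at z)"
  using has_real_derivative_entire_power_series[OF summable_charlier_moment[OF assms(1)] assms(2)]
  unfolding charlier_moment_def[abs_def] by (simp add: mult.assoc)

lemma charlier_moment_differentiable: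
  "\<beta> > -1 \<Longrightarrow> z \<noteq> 0 \<Longrightarrow> charlier_moment \<beta> j differentiable (at z)"
  using charlier_moment_has_derivative real_differentiable_def by blast

lemma euler_op_eqI:
  assumes "(g has_real_derivative D) (at z)" and "open S" "z \<in> S" "\<And>x. x \<in> S \<Longrightarrow> f x = g x"
  shows "euler_op f z = z * D"
proof -
  have "(f has_real_derivative D) (at z)"
    by (rule has_field_derivative_transform_within_open[OF assms(1,2,3)]) (use assms(4) in auto)
  thus ?thesis unfolding euler_op_def by (simp add: DERIV_imp_deriv)
qed

lemma bessel_psi_eq_moment:
  assumes \<beta>: "\<beta> > -1" and w: "w > 0"
  shows "w powr (-\<beta> / 2) * besselI \<beta> (2 * sqrt w) = charlier_moment \<beta> 0 w / Gamma (\<beta> + 1)"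
proof -
  have G: "Gamma (\<beta> + 1) > 0" using \<beta> by simp
  have summand: "(2 * sqrt w / 2) powr (2 * real k + \<beta>) / (fact k * Gamma (real k + \<beta> + 1))
      = w powr (\<beta> / 2) / Gamma (\<beta> + 1) * ((real k ^ 0 * charlier_coeff \<beta> k) * w ^ k)" for k
  proof -
    have "(2 * sqrt w / 2) powr (2 * real k + \<beta>) = (w powr (1/2)) powr (2 * real k + \<beta>)"
      using w by (simp add: powr_half_sqrt)
    also have "\<dots> = w ^ k * w powr (\<beta> / 2)"
      using w by (simp add: powr_powr algebra_simps powr_add powr_realpow)
    finally have pow: "(2 * sqrt w / 2) powr (2 * real k + \<beta>) = w ^ k * w powr (\<beta> / 2)" .
    have "pochhammer (\<beta> + 1) k = Gamma (\<beta> + 1 + real k) / Gamma (\<beta> + 1)"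
      using \<beta> by (intro pochhammer_Gamma) auto
    hence gam: "Gamma (real k + \<beta> + 1) = pochhammer (\<beta> + 1) k * Gamma (\<beta> + 1)"
      using G by (simp add: field_simps add_ac)
    have "pochhammer (\<beta> + 1) k > 0" using \<beta> by (intro pochhammer_pos) auto
    thus ?thesis unfolding pow gam charlier_coeff_def using G by (simp add: field_simps)
  qed
  have "besselI \<beta> (2 * sqrt w) = w powr (\<beta> / 2) / Gamma (\<beta> + 1) * charlier_moment \<beta> 0 w"
    unfolding besselI_def summand charlier_moment_def
    by (rule suminf_mult[OF summable_charlier_moment[OF \<beta>]])
  moreover have "w powr (-\<beta> / 2) * w powr (\<beta> / 2) = 1"
    using w by (simp add: powr_add[symmetric])
  ultimately show ?thesis by (simp add: field_simps)
qed

lemma euler_op_iterate_bessel_psi: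
  assumes \<beta>: "\<beta> > -1" and z: "z > 0"
  shows "(euler_op ^^ j) (\<lambda>w. w powr (-\<beta> / 2) * besselI \<beta> (2 * sqrt w)) z
    = charlier_moment \<beta> j z / Gamma (\<beta> + 1)"
  using z
proof (induction j arbitrary: z)
  case 0
  then show ?case using bessel_psi_eq_moment[OF \<beta>] by simp
next
  case (Suc j)
  have "((\<lambda>x. charlier_moment \<beta> j x / Gamma (\<beta> + 1)) has_real_derivative
      charlier_moment \<beta> (Suc j) z / z / Gamma (\<beta> + 1)) (at z)"
    using Suc.prems by (intro DERIV_cdivide charlier_moment_has_derivative[OF \<beta>]) auto
  hence "euler_op ((euler_op ^^ j) (\<lambda>w. w powr (-\<beta> / 2) * besselI \<beta> (2 * sqrt w))) z
      = z * (charlier_moment \<beta> (Suc j) z / z / Gamma (\<beta> + 1))"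
    by (rule euler_op_eqI[where S = "{0<..}"]) (use Suc in auto)
  thus ?case using Suc.prems by simp
qed

definition moment_hankel :: "real \<Rightarrow> nat \<Rightarrow> real \<Rightarrow> real mat" where
  "moment_hankel \<beta> n z = mat n n (\<lambda>(i, j). charlier_moment \<beta> (i + j) z)"

lemma Delta_eq_det_moment_hankel:
  assumes \<beta>: "\<beta> > -1" and z: "z > 0"
  shows "Delta n \<beta> z = det (moment_hankel \<beta> n z)"
proof -
  let ?G = "Gamma (\<beta> + 1)"
  have "mat n n (\<lambda>(j, k). (euler_op ^^ (j + k)) (\<lambda>w. w powr (-\<beta> / 2) * besselI \<beta> (2 * sqrt w)) z)
      = (1 / ?G) \<cdot>\<^sub>m moment_hankel \<beta> n z"
    unfolding euler_op_iterate_bessel_psi[OF \<beta> z] moment_hankel_def by (rule eq_matI) auto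
  moreover have "?G > 0" using \<beta> by simp
  ultimately show ?thesis
    unfolding Delta_def Wdet_def by (simp add: power_one_over moment_hankel_def)
qed

definition charlier_inner :: "real \<Rightarrow> nat \<Rightarrow> real \<Rightarrow> real poly \<Rightarrow> real poly \<Rightarrow> real" where
  "charlier_inner \<beta> s z q r =
     (\<Sum>k. charlier_weight \<beta> z k * real k ^ s * poly q (real k) * poly r (real k))"

lemma poly_eq_sum_lessThan:
  fixes q :: "'a::comm_semiring_1 poly"
  assumes "degree q < N"
  shows "poly q x = (\<Sum>i<N. coeff q i * x ^ i)"
  unfolding poly_altdef by (rule sum.mono_neutral_left) (use assms in \<open>auto simp: coeff_eq_0\<close>)

lemma charlier_inner_sums_moments:
  assumes \<beta>: "\<beta> > -1" and q: "degree q < N" and r: "degree r < N"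
  shows "(\<lambda>k. charlier_weight \<beta> z k * real k ^ s * poly q (real k) * poly r (real k)) sums
    (\<Sum>i<N. \<Sum>j<N. coeff q i * coeff r j * charlier_moment \<beta> (i + j + s) z)"
proof -
  have "charlier_weight \<beta> z k * real k ^ s * poly q (real k) * poly r (real k)
     = (\<Sum>i<N. \<Sum>j<N. coeff q i * coeff r j * ((real k ^ (i + j + s) * charlier_coeff \<beta> k) * z ^ k))"
    for k
    unfolding charlier_weight_eq poly_eq_sum_lessThan[OF q] poly_eq_sum_lessThan[OF r]
    by (simp add: sum_distrib_left sum_distrib_right power_add mult_ac)
  thus ?thesis by (simp only:) (intro sums_sum sums_mult charlier_moment_sums[OF \<beta>])
qed

lemma charlier_inner_eq_moments:
  "\<beta> > -1 \<Longrightarrow> degree q < N \<Longrightarrow> degree r < N \<Longrightarrow>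
    charlier_inner \<beta> s z q r = (\<Sum>i<N. \<Sum>j<N. coeff q i * coeff r j * charlier_moment \<beta> (i + j + s) z)"
  unfolding charlier_inner_def by (rule sums_unique[symmetric], rule charlier_inner_sums_moments)

lemma summable_charlier_inner:
  "\<beta> > -1 \<Longrightarrow> summable (\<lambda>k. charlier_weight \<beta> z k * real k ^ s * poly q (real k) * poly r (real k))"
  by (rule sums_summable[OF charlier_inner_sums_moments[where N = "Suc (max (degree q) (degree r))"]])
    auto

lemma charlier_inner_monom:
  assumes \<beta>: "\<beta> > -1" and j: "j < N" and r: "degree r < N"
  shows "charlier_inner \<beta> s z (monom 1 j) r = (\<Sum>l<N. coeff r l * charlier_moment \<beta> (j + l + s) z)"
proof -
  have "charlier_inner \<beta> s z (monom 1 j) r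
      = (\<Sum>i<N. \<Sum>l<N. coeff (monom 1 j) i * coeff r l * charlier_moment \<beta> (i + l + s) z)"
    using j r by (intro charlier_inner_eq_moments[OF \<beta>]) (auto simp: degree_monom_eq)
  also have "\<dots> = (\<Sum>i<N. if i = j then \<Sum>l<N. coeff r l * charlier_moment \<beta> (i + l + s) z else 0)"
    by (rule sum.cong[OF refl]) (simp add: coeff_monom)
  finally show ?thesis using j by simp
qed

lemma charlier_inner_add:
  "\<beta> > -1 \<Longrightarrow> charlier_inner \<beta> s z (q1 + q2) r = charlier_inner \<beta> s z q1 r + charlier_inner \<beta> s z q2 r"
  unfolding charlier_inner_def
  by (subst suminf_add[OF summable_charlier_inner summable_charlier_inner]; simp add: algebra_simps)

lemma charlier_inner_smult:
  "\<beta> > -1 \<Longrightarrow> charlier_inner \<beta> s z (Polynomial.smult c q) r = c * charlier_inner \<beta> s z q r"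
  unfolding charlier_inner_def
  by (subst suminf_mult[OF summable_charlier_inner, symmetric]; simp add: algebra_simps)

lemma charlier_inner_commute: "charlier_inner \<beta> s z q r = charlier_inner \<beta> s z r q"
  unfolding charlier_inner_def by (simp add: mult_ac)

lemma charlier_inner_smult_right:
  "\<beta> > -1 \<Longrightarrow> charlier_inner \<beta> s z q (Polynomial.smult c r) = c * charlier_inner \<beta> s z q r"
  by (metis charlier_inner_commute charlier_inner_smult)

lemma charlier_inner_0 [simp]: "charlier_inner \<beta> s z 0 r = 0"
  unfolding charlier_inner_def by simp

lemma charlier_inner_x: "charlier_inner \<beta> 1 z q r = charlier_inner \<beta> 0 z ([:0, 1:] * q) r"
  unfolding charlier_inner_def by (simp add: mult_ac)

text \<open>Differentiating the moments under the finite double sum turns \<open>\<mu>\<^sub>i\<^sub>+\<^sub>j\<close> into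
  \<open>\<mu>\<^sub>i\<^sub>+\<^sub>j\<^sub>+\<^sub>1 / z\<close>, i.e.\ produces the inner product with an extra factor \<open>x / z\<close>.\<close>
lemma charlier_inner_has_derivative:
  fixes q r :: "real \<Rightarrow> real poly"
  assumes \<beta>: "\<beta> > -1" and z0: "z0 > 0"
    and deg: "\<And>z. z > 0 \<Longrightarrow> degree (q z) < N \<and> degree (r z) < N"
    and deg': "degree q' < N" "degree r' < N"
    and dq: "\<And>i. ((\<lambda>z. coeff (q z) i) has_real_derivative coeff q' i) (at z0)"
    and dr: "\<And>j. ((\<lambda>z. coeff (r z) j) has_real_derivative coeff r' j) (at z0)"
  shows "((\<lambda>z. charlier_inner \<beta> 0 z (q z) (r z)) has_real_derivative
      charlier_inner \<beta> 0 z0 q' (r z0) + charlier_inner \<beta> 0 z0 (q z0) r'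
      + charlier_inner \<beta> 1 z0 (q z0) (r z0) / z0) (at z0)"
proof -
  let ?\<mu> = "charlier_moment \<beta>"
  have "((\<lambda>z. \<Sum>i<N. \<Sum>j<N. coeff (q z) i * coeff (r z) j * ?\<mu> (i + j) z) has_real_derivative
      (\<Sum>i<N. \<Sum>j<N. coeff q' i * coeff (r z0) j * ?\<mu> (i + j) z0
         + coeff (q z0) i * coeff r' j * ?\<mu> (i + j) z0
         + coeff (q z0) i * coeff (r z0) j * (?\<mu> (i + j + 1) z0 / z0))) (at z0)"
    using z0 by (intro DERIV_sum)
      (auto intro!: derivative_eq_intros dq dr charlier_moment_has_derivative[OF \<beta>] simp: algebra_simps)
  moreover have "(\<Sum>i<N. \<Sum>j<N. coeff q' i * coeff (r z0) j * ?\<mu> (i + j) z0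
         + coeff (q z0) i * coeff r' j * ?\<mu> (i + j) z0
         + coeff (q z0) i * coeff (r z0) j * (?\<mu> (i + j + 1) z0 / z0))
      = charlier_inner \<beta> 0 z0 q' (r z0) + charlier_inner \<beta> 0 z0 (q z0) r'
        + charlier_inner \<beta> 1 z0 (q z0) (r z0) / z0"
    using deg[OF z0] deg'
    by (simp add: charlier_inner_eq_moments[OF \<beta>, of q' N] charlier_inner_eq_moments[OF \<beta>, of "q z0" N]
        sum.distrib sum_divide_distrib)
  ultimately have "((\<lambda>z. \<Sum>i<N. \<Sum>j<N. coeff (q z) i * coeff (r z) j * ?\<mu> (i + j) z) has_real_derivative
      charlier_inner \<beta> 0 z0 q' (r z0) + charlier_inner \<beta> 0 z0 (q z0) r'
      + charlier_inner \<beta> 1 z0 (q z0) (r z0) / z0) (at z0)"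
    by simp
  thus ?thesis
  proof (rule has_field_derivative_transform_within_open[where S = "{0<..}"])
    fix z :: real assume "z \<in> {0<..}"
    thus "(\<Sum>i<N. \<Sum>j<N. coeff (q z) i * coeff (r z) j * ?\<mu> (i + j) z) = charlier_inner \<beta> 0 z (q z) (r z)"
      using deg charlier_inner_eq_moments[OF \<beta>, of "q z" N "r z" 0 z] by simp
  qed (use z0 in auto)
qed

lemma prod_differentiable:
  fixes f :: "'i \<Rightarrow> real \<Rightarrow> real"
  assumes "\<And>i. i \<in> I \<Longrightarrow> f i differentiable (at x)"
  shows "(\<lambda>x. \<Prod>i\<in>I. f i x) differentiable (at x)"
proof -
  obtain f' where "\<And>i. i \<in> I \<Longrightarrow> (f i has_derivative f' i) (at x)"
    using assms unfolding differentiable_def by metis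
  thus ?thesis unfolding differentiable_def by (blast intro: has_derivative_prod)
qed

lemma det_mat_differentiable:
  fixes f :: "nat \<Rightarrow> nat \<Rightarrow> real \<Rightarrow> real"
  assumes "\<And>i j. i < n \<Longrightarrow> j < n \<Longrightarrow> f i j differentiable (at x)"
  shows "(\<lambda>z. det (mat n n (\<lambda>(i, j). f i j z))) differentiable (at x)"
proof -
  have leibniz: "det (mat n n (\<lambda>(i, j). f i j z))
      = (\<Sum>\<pi>\<in>{\<pi>. \<pi> permutes {0..<n}}. signof \<pi> * (\<Prod>i=0..<n. f i (\<pi> i) z))" for z
    by (subst det_def'[of _ n]) (auto intro!: sum.cong prod.cong simp: permutes_in_image)
  show ?thesis unfolding leibniz
    by (intro differentiable_sum differentiable_mult prod_differentiable assms ballI)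
      (auto simp: finite_permutations permutes_in_image)
qed

locale charlier_orthonormal_system =
  fixes \<beta> :: real and p :: "real \<Rightarrow> nat \<Rightarrow> real poly"
  assumes beta: "\<beta> > -1"
    and degree_p: "\<And>z n. z > 0 \<Longrightarrow> degree (p z n) = n"
    and lead_coeff_p_pos: "\<And>z n. z > 0 \<Longrightarrow> lead_coeff (p z n) > 0"
    and orthonormal: "\<And>z m n. z > 0 \<Longrightarrow>
       (\<lambda>k. charlier_weight \<beta> z k * poly (p z m) (real k) * poly (p z n) (real k))
         sums (if m = n then 1 else 0)"
begin

abbreviation ip :: "real \<Rightarrow> real poly \<Rightarrow> real poly \<Rightarrow> real" where
  "ip z \<equiv> charlier_inner \<beta> 0 z"

text \<open>\<open>monic_op n z\<close> is \<open>\<pi>\<^sub>n\<close> and \<open>sqnorm n z\<close> is \<open>h\<^sub>n = \<langle>\<pi>\<^sub>n, \<pi>\<^sub>n\<rangle>\<close> (see \<open>ip_monic_op\<close>).\<close>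
definition monic_op :: "nat \<Rightarrow> real \<Rightarrow> real poly" where
  "monic_op n z = Polynomial.smult (inverse (lead_coeff (p z n))) (p z n)"

definition sqnorm :: "nat \<Rightarrow> real \<Rightarrow> real" where
  "sqnorm n z = inverse (lead_coeff (p z n)) ^ 2"

lemma ip_p_p: "z > 0 \<Longrightarrow> ip z (p z m) (p z n) = (if m = n then 1 else 0)"
  unfolding charlier_inner_def using orthonormal[of z m n] by (simp add: sums_iff)

lemma coeff_p_top: "z > 0 \<Longrightarrow> coeff (p z n) n = lead_coeff (p z n)"
  using degree_p by simp

lemma coeff_p_gt: "z > 0 \<Longrightarrow> n < i \<Longrightarrow> coeff (p z n) i = 0"
  using degree_p by (simp add: coeff_eq_0)

lemma p_nonzero: "z > 0 \<Longrightarrow> p z n \<noteq> 0"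
  using lead_coeff_p_pos[of z n] by (metis leading_coeff_0_iff less_irrefl)

lemma sqnorm_pos: "z > 0 \<Longrightarrow> sqnorm n z > 0"
  unfolding sqnorm_def using p_nonzero[of z n] by simp

lemma lead_coeff_sq_mult_sqnorm: "z > 0 \<Longrightarrow> lead_coeff (p z n) ^ 2 * sqnorm n z = 1"
  unfolding sqnorm_def using p_nonzero[of z n] by (simp add: field_simps)

lemma sqnorm_nonzero: "z > 0 \<Longrightarrow> sqnorm n z \<noteq> 0"
  using sqnorm_pos[of z n] by simp

lemma coeff_monic_op_top: "z > 0 \<Longrightarrow> coeff (monic_op n z) n = 1"
  unfolding monic_op_def using coeff_p_top[of z n] lead_coeff_p_pos[of z n] p_nonzero[of z n]
  by (simp add: field_simps)

lemma coeff_monic_op_gt: "z > 0 \<Longrightarrow> n < i \<Longrightarrow> coeff (monic_op n z) i = 0"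
  unfolding monic_op_def using coeff_p_gt by simp

lemma degree_monic_op: "z > 0 \<Longrightarrow> degree (monic_op n z) = n"
  unfolding monic_op_def using degree_p[of z n] lead_coeff_p_pos[of z n] by (simp add: p_nonzero)

lemma charlier_inner_p_p_eq_monic_op:
  assumes z: "z > 0"
  shows "charlier_inner \<beta> s z (p z m) (p z n)
    = lead_coeff (p z m) * lead_coeff (p z n) * charlier_inner \<beta> s z (monic_op m z) (monic_op n z)"
  using p_nonzero[OF z, of m] p_nonzero[OF z, of n]
  by (simp add: monic_op_def charlier_inner_smult[OF beta] charlier_inner_smult_right[OF beta] field_simps)

lemma ip_p_eq_0:
  assumes z: "z > 0"
  shows "m \<le> n \<Longrightarrow> \<forall>i\<ge>m. coeff q i = 0 \<Longrightarrow> ip z q (p z n) = 0"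
proof (induction m arbitrary: q)
  case 0
  hence "q = 0" by (auto simp: poly_eq_iff)
  thus ?case by simp
next
  case (Suc m)
  define c where "c = coeff q m / lead_coeff (p z m)"
  have "\<forall>i\<ge>m. coeff (q - Polynomial.smult c (p z m)) i = 0"
  proof (intro allI impI)
    fix i assume "m \<le> i"
    thus "coeff (q - Polynomial.smult c (p z m)) i = 0"
      using Suc.prems lead_coeff_p_pos[OF z, of m] coeff_p_top[OF z, of m] coeff_p_gt[OF z, of m i]
      by (cases "i = m") (auto simp: c_def)
  qed
  hence "ip z (q - Polynomial.smult c (p z m)) (p z n) = 0"
    using Suc by simp
  moreover have "ip z (p z m) (p z n) = 0" using ip_p_p[OF z, of m n] Suc.prems by simp
  ultimately show ?case
    using charlier_inner_add[OF beta, of 0 z "q - Polynomial.smult c (p z m)" "Polynomial.smult c (p z m)"]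
    by (simp add: charlier_inner_smult[OF beta])
qed

lemma ip_monic_op:
  assumes z: "z > 0" and q: "degree q \<le> n"
  shows "ip z q (monic_op n z) = coeff q n * sqnorm n z"
proof -
  define c where "c = coeff q n"
  define r where "r = q - Polynomial.smult c (monic_op n z)"
  have "\<forall>i\<ge>n. coeff r i = 0"
    using q coeff_monic_op_top[OF z] coeff_monic_op_gt[OF z] by (auto simp: r_def c_def coeff_eq_0 le_less)
  hence r: "ip z r (p z n) = 0" by (rule ip_p_eq_0[OF z order.refl])
  have "ip z (monic_op n z) (monic_op n z) = sqnorm n z"
    unfolding monic_op_def sqnorm_def
    by (simp add: charlier_inner_smult[OF beta] charlier_inner_smult_right[OF beta] ip_p_p[OF z]
        power2_eq_square)
  moreover have "ip z r (monic_op n z) = 0"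
    unfolding monic_op_def by (simp add: charlier_inner_smult_right[OF beta] r)
  moreover have "ip z q (monic_op n z) = ip z (Polynomial.smult c (monic_op n z) + r) (monic_op n z)"
    by (simp add: r_def)
  ultimately show ?thesis
    by (simp add: charlier_inner_add[OF beta] charlier_inner_smult[OF beta] c_def)
qed

lemma ip_monic_op_monic_op:
  assumes z: "z > 0"
  shows "ip z (monic_op m z) (monic_op n z) = (if m = n then sqnorm n z else 0)"
  using z
proof (cases m n rule: linorder_cases)
  case greater
  thus ?thesis
    by (subst charlier_inner_commute) (simp add: z ip_monic_op degree_monic_op coeff_monic_op_gt)
qed (simp_all add: ip_monic_op degree_monic_op coeff_monic_op_top coeff_monic_op_gt)

text \<open>With \<open>P\<close> the lower triangular coefficient matrix of \<open>p\<^sub>0, \<dots>, p\<^sub>n\<^sub>-\<^sub>1\<close>, orthonormality reads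
  \<open>P M P\<^sup>T = 1\<close> for the Hankel moment matrix \<open>M\<close>, and \<open>det P\<close> is the product of the leading coefficients.\<close>
lemma det_moment_hankel:
  assumes z: "z > 0"
  shows "det (moment_hankel \<beta> n z) = (\<Prod>i<n. sqnorm i z)"
proof -
  define P where "P = mat n n (\<lambda>(i, l). coeff (p z i) l)"
  define M where "M = moment_hankel \<beta> n z"
  have P: "P \<in> carrier_mat n n" and M: "M \<in> carrier_mat n n"
    by (auto simp: P_def M_def moment_hankel_def)
  have PMP: "P * M * transpose_mat P = 1\<^sub>m n"
  proof (rule eq_matI)
    fix m m' assume "m < dim_row (1\<^sub>m n :: real mat)" "m' < dim_col (1\<^sub>m n :: real mat)"
    hence mn: "m < n" "m' < n" by auto
    have "(P * M * transpose_mat P) $$ (m, m')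
        = (\<Sum>l<n. (\<Sum>i<n. coeff (p z m) i * charlier_moment \<beta> (i + l) z) * coeff (p z m') l)"
      using mn by (simp add: P_def M_def moment_hankel_def scalar_prod_def atLeast0LessThan)
    also have "\<dots> = (\<Sum>i<n. \<Sum>l<n. coeff (p z m) i * coeff (p z m') l * charlier_moment \<beta> (i + l) z)"
      unfolding sum_distrib_right by (subst sum.swap) (simp add: mult_ac)
    also have "\<dots> = ip z (p z m) (p z m')"
      using mn degree_p[OF z] by (simp add: charlier_inner_eq_moments[OF beta, where N = n])
    also have "\<dots> = (1\<^sub>m n :: real mat) $$ (m, m')" using ip_p_p[OF z] mn by simp
    finally show "(P * M * transpose_mat P) $$ (m, m') = (1\<^sub>m n :: real mat) $$ (m, m')" .
  qed (auto simp: P_def M_def moment_hankel_def)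
  have "det P * det M * det P = det (P * M * transpose_mat P)"
    using P M by (simp add: det_mult[of _ n] det_transpose[OF P])
  hence "det P * det M * det P = 1" unfolding PMP by simp
  moreover have "det P = (\<Prod>i<n. lead_coeff (p z i))"
    using P by (subst det_lower_triangular[of n])
      (auto simp: P_def coeff_p_gt[OF z] coeff_p_top[OF z] prod_list_diag_prod atLeast0LessThan)
  moreover have "(\<Prod>i<n. lead_coeff (p z i)) \<noteq> 0"
    using lead_coeff_p_pos[OF z] p_nonzero[OF z] by simp
  ultimately have "det M = inverse (\<Prod>i<n. lead_coeff (p z i)) ^ 2"
    by (simp add: field_simps power2_eq_square)
  thus ?thesis by (simp add: M_def sqnorm_def prod_power_distrib[symmetric] prod_inversef[symmetric] comp_def)
qed

lemma det_moment_hankel_pos: "z > 0 \<Longrightarrow> det (moment_hankel \<beta> n z) > 0"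
  unfolding det_moment_hankel by (intro prod_pos) (auto intro: sqnorm_pos)

lemma Delta_eq_prod_sqnorm: "z > 0 \<Longrightarrow> Delta n \<beta> z = (\<Prod>i<n. sqnorm i z)"
  using Delta_eq_det_moment_hankel[OF beta] det_moment_hankel by simp

lemma Delta_Suc_div_Delta: "z > 0 \<Longrightarrow> Delta (Suc n) \<beta> z / Delta n \<beta> z = sqnorm n z"
  using sqnorm_nonzero[of z] by (simp add: Delta_eq_prod_sqnorm)

lemma moment_hankel_monic_op_coeffs:
  assumes z: "z > 0" and j: "j < n"
  shows "(\<Sum>i<n. charlier_moment \<beta> (j + i) z * coeff (monic_op n z) i) = - charlier_moment \<beta> (j + n) z"
proof -
  have "0 = ip z (monom 1 j) (monic_op n z)"
    using ip_monic_op[OF z, of "monom 1 j" n] j by (simp add: degree_monom_eq)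
  also have "\<dots> = (\<Sum>i<Suc n. coeff (monic_op n z) i * charlier_moment \<beta> (j + i) z)"
    using j degree_monic_op[OF z, of n] by (simp add: charlier_inner_monom[OF beta, where N = "Suc n"])
  also have "\<dots> = (\<Sum>i<n. charlier_moment \<beta> (j + i) z * coeff (monic_op n z) i) + charlier_moment \<beta> (j + n) z"
    by (simp add: coeff_monic_op_top[OF z] mult.commute)
  finally show ?thesis by simp
qed

lemma coeff_monic_op_cramer:
  assumes z: "z > 0" and k: "k < n"
  shows "coeff (monic_op n z) k
    = det (mat n n (\<lambda>(i, j). if j = k then - charlier_moment \<beta> (i + n) z else charlier_moment \<beta> (i + j) z))
      / det (moment_hankel \<beta> n z)"
proof -
  define A where "A = moment_hankel \<beta> n z"
  define x where "x = vec n (\<lambda>i. coeff (monic_op n z) i)"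
  have A: "A \<in> carrier_mat n n" by (simp add: A_def moment_hankel_def)
  have "A *\<^sub>v x = vec n (\<lambda>j. - charlier_moment \<beta> (j + n) z)"
    using moment_hankel_monic_op_coeffs[OF z]
    by (intro eq_vecI) (auto simp: A_def x_def moment_hankel_def scalar_prod_def atLeast0LessThan)
  hence "replace_col A (A *\<^sub>v x) k
      = mat n n (\<lambda>(i, j). if j = k then - charlier_moment \<beta> (i + n) z else charlier_moment \<beta> (i + j) z)"
    by (auto intro!: eq_matI simp: replace_col_def A_def moment_hankel_def)
  moreover have "det (replace_col A (A *\<^sub>v x) k) = x $ k * det A"
    by (rule cramer_lemma_mat[OF A _ k]) (simp add: x_def)
  moreover have "det A > 0" unfolding A_def by (rule det_moment_hankel_pos[OF z])
  ultimately show ?thesis using k by (simp add: x_def A_def field_simps)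
qed

lemma coeff_monic_op_differentiable:
  assumes z0: "z0 > 0" and k: "k < n"
  shows "(\<lambda>z. coeff (monic_op n z) k) differentiable (at z0)"
proof -
  let ?M = "\<lambda>z. mat n n (\<lambda>(i, j). if j = k then - charlier_moment \<beta> (i + n) z else charlier_moment \<beta> (i + j) z)"
  have "(\<lambda>z. det (?M z) / det (mat n n (\<lambda>(i, j). charlier_moment \<beta> (i + j) z))) differentiable (at z0)"
  proof (intro differentiable_divide det_mat_differentiable)
    fix i j
    show "(\<lambda>z. if j = k then - charlier_moment \<beta> (i + n) z else charlier_moment \<beta> (i + j) z) differentiable (at z0)"
      using z0 by (cases "j = k") (auto intro!: differentiable_minus charlier_moment_differentiable[OF beta])
    show "charlier_moment \<beta> (i + j) differentiable (at z0)"
      using z0 by (intro charlier_moment_differentiable[OF beta]) auto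
  next
    show "det (mat n n (\<lambda>(i, j). charlier_moment \<beta> (i + j) z0)) \<noteq> 0"
      using det_moment_hankel_pos[OF z0, of n] by (simp add: moment_hankel_def)
  qed
  then obtain D where "((\<lambda>z. det (?M z) / det (moment_hankel \<beta> n z)) has_real_derivative D) (at z0)"
    by (auto simp: real_differentiable_def moment_hankel_def)
  hence "((\<lambda>z. coeff (monic_op n z) k) has_real_derivative D) (at z0)"
    by (rule has_field_derivative_transform_within_open[where S = "{0<..}"])
      (use z0 coeff_monic_op_cramer k in auto)
  thus ?thesis by (auto simp: real_differentiable_def)
qed

text \<open>\<open>monic_op_deriv n z\<^sub>0\<close> is \<open>\<partial>\<^sub>z \<pi>\<^sub>n\<close> at \<open>z\<^sub>0\<close>, differentiated coefficientwise; as \<open>\<pi>\<^sub>n\<close> is monic it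
  has degree below \<open>n\<close>.\<close>
definition monic_op_deriv :: "nat \<Rightarrow> real \<Rightarrow> real poly" where
  "monic_op_deriv n z0 = (\<Sum>i<n. monom (deriv (\<lambda>z. coeff (monic_op n z) i) z0) i)"

lemma coeff_monic_op_deriv:
  "coeff (monic_op_deriv n z0) i = (if i < n then deriv (\<lambda>z. coeff (monic_op n z) i) z0 else 0)"
  unfolding monic_op_deriv_def by (simp add: coeff_sum coeff_monom)

lemma degree_monic_op_deriv: "degree (monic_op_deriv n z0) \<le> n - 1"
  by (rule degree_le) (auto simp: coeff_monic_op_deriv)

lemma coeff_monic_op_has_derivative:
  assumes z0: "z0 > 0"
  shows "((\<lambda>z. coeff (monic_op n z) i) has_real_derivative coeff (monic_op_deriv n z0) i) (at z0)"
proof (cases "i < n")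
  case True
  thus ?thesis
    using coeff_monic_op_differentiable[OF z0 True]
    by (simp add: coeff_monic_op_deriv DERIV_deriv_iff_real_differentiable)
next
  case False
  have "((\<lambda>z. coeff (monic_op n z) i) has_real_derivative 0) (at z0)"
    by (rule has_field_derivative_transform_within_open[where f = "\<lambda>_. if i = n then 1 else 0" and S = "{0<..}"])
      (use z0 False coeff_monic_op_top coeff_monic_op_gt in auto)
  thus ?thesis using False by (simp add: coeff_monic_op_deriv)
qed

lemma ip_monic_op_has_derivative:
  assumes z0: "z0 > 0"
  shows "((\<lambda>z. ip z (monic_op m z) (monic_op n z)) has_real_derivative
      ip z0 (monic_op_deriv m z0) (monic_op n z0) + ip z0 (monic_op m z0) (monic_op_deriv n z0)
      + charlier_inner \<beta> 1 z0 (monic_op m z0) (monic_op n z0) / z0) (at z0)"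
  using degree_monic_op degree_monic_op_deriv[of m z0] degree_monic_op_deriv[of n z0]
  by (intro charlier_inner_has_derivative[OF beta z0, where N = "Suc (max m n)"]
      coeff_monic_op_has_derivative[OF z0]) auto

text \<open>The coefficient of \<open>x\<^sup>n\<^sup>-\<^sup>1\<close> in \<open>\<pi>\<^sub>n\<close>, written so that it is \<open>0\<close> for \<open>n = 0\<close>.\<close>
definition subleading :: "nat \<Rightarrow> real \<Rightarrow> real" where
  "subleading n z = coeff (pCons 0 (monic_op n z)) n"

lemma subleading_0 [simp]: "subleading 0 z = 0"
  by (simp add: subleading_def)

lemma subleading_Suc: "subleading (Suc n) z = coeff (monic_op (Suc n) z) n"
  by (simp add: subleading_def)

text \<open>\<open>\<langle>x \<pi>\<^sub>n, \<pi>\<^sub>n\<rangle> = \<langle>x \<pi>\<^sub>n - \<pi>\<^sub>n\<^sub>+\<^sub>1, \<pi>\<^sub>n\<rangle>\<close>, and \<open>x \<pi>\<^sub>n - \<pi>\<^sub>n\<^sub>+\<^sub>1\<close> has degree \<open>n\<close>.\<close>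
lemma charlier_inner_x_monic_op_diag:
  assumes z: "z > 0"
  shows "charlier_inner \<beta> 1 z (monic_op n z) (monic_op n z) = (subleading n z - subleading (Suc n) z) * sqnorm n z"
proof -
  define r where "r = [:0, 1:] * monic_op n z - monic_op (Suc n) z"
  have "coeff r i = 0" if "n < i" for i
  proof (cases "i = Suc n")
    case False
    then obtain j where "i = Suc j" "n < j" using \<open>n < i\<close> by (cases i) auto
    thus ?thesis by (simp add: r_def coeff_monic_op_gt[OF z])
  qed (simp add: r_def coeff_monic_op_top[OF z])
  hence "degree r \<le> n" by (intro degree_le) auto
  hence "ip z r (monic_op n z) = (subleading n z - subleading (Suc n) z) * sqnorm n z"
    by (simp add: ip_monic_op[OF z] r_def subleading_def)
  moreover have "ip z (monic_op (Suc n) z) (monic_op n z) = 0"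
    by (simp add: ip_monic_op_monic_op[OF z])
  ultimately show ?thesis
    unfolding charlier_inner_x
    using charlier_inner_add[OF beta, of 0 z r "monic_op (Suc n) z" "monic_op n z"] by (simp add: r_def)
qed

lemma charlier_inner_x_monic_op_Suc:
  "z > 0 \<Longrightarrow> charlier_inner \<beta> 1 z (monic_op n z) (monic_op (Suc n) z) = sqnorm (Suc n) z"
  unfolding charlier_inner_x
  by (subst ip_monic_op) (auto simp: degree_monic_op coeff_monic_op_top intro: order.trans[OF degree_mult_le])

lemma sqnorm_has_derivative:
  assumes z0: "z0 > 0"
  shows "(sqnorm n has_real_derivative (subleading n z0 - subleading (Suc n) z0) * sqnorm n z0 / z0) (at z0)"
proof -
  have "ip z0 (monic_op_deriv n z0) (monic_op n z0) = 0"
    using degree_monic_op_deriv[of n z0] by (simp add: ip_monic_op[OF z0] coeff_monic_op_deriv)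
  hence "((\<lambda>z. ip z (monic_op n z) (monic_op n z)) has_real_derivative
      (subleading n z0 - subleading (Suc n) z0) * sqnorm n z0 / z0) (at z0)"
    using ip_monic_op_has_derivative[OF z0, of n n] charlier_inner_x_monic_op_diag[OF z0, of n]
    by (simp add: charlier_inner_commute[of \<beta> 0 z0 "monic_op n z0"])
  thus ?thesis
    by (rule has_field_derivative_transform_within_open[where S = "{0<..}"])
      (use z0 in \<open>auto simp: ip_monic_op_monic_op\<close>)
qed

text \<open>Differentiate \<open>\<langle>\<pi>\<^sub>n\<^sub>+\<^sub>1, \<pi>\<^sub>n\<rangle> = 0\<close>: only \<open>\<partial>\<^sub>z \<pi>\<^sub>n\<^sub>+\<^sub>1\<close> has a component along \<open>\<pi>\<^sub>n\<close>.\<close>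
lemma subleading_has_derivative:
  assumes z0: "z0 > 0"
  shows "(subleading (Suc n) has_real_derivative - sqnorm (Suc n) z0 / (z0 * sqnorm n z0)) (at z0)"
proof -
  let ?d = "coeff (monic_op_deriv (Suc n) z0) n"
  have "ip z0 (monic_op_deriv (Suc n) z0) (monic_op n z0) = ?d * sqnorm n z0"
    using degree_monic_op_deriv[of "Suc n" z0] by (simp add: ip_monic_op[OF z0])
  moreover have "ip z0 (monic_op (Suc n) z0) (monic_op_deriv n z0) = 0"
    using degree_monic_op_deriv[of n z0]
    by (subst charlier_inner_commute) (simp add: ip_monic_op[OF z0] coeff_monic_op_deriv)
  moreover have "charlier_inner \<beta> 1 z0 (monic_op (Suc n) z0) (monic_op n z0) = sqnorm (Suc n) z0"
    by (subst charlier_inner_commute) (rule charlier_inner_x_monic_op_Suc[OF z0])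
  ultimately have "((\<lambda>z. ip z (monic_op (Suc n) z) (monic_op n z)) has_real_derivative
      ?d * sqnorm n z0 + sqnorm (Suc n) z0 / z0) (at z0)"
    using ip_monic_op_has_derivative[OF z0, of "Suc n" n] by simp
  moreover have "((\<lambda>z. ip z (monic_op (Suc n) z) (monic_op n z)) has_real_derivative 0) (at z0)"
    by (rule has_field_derivative_transform_within_open[where f = "\<lambda>_. 0" and S = "{0<..}"])
      (use z0 in \<open>auto simp: ip_monic_op_monic_op\<close>)
  ultimately have "?d = - sqnorm (Suc n) z0 / (z0 * sqnorm n z0)"
    using DERIV_unique z0 sqnorm_pos[OF z0, of n] by (fastforce simp: field_simps)
  thus ?thesis
    using coeff_monic_op_has_derivative[OF z0, of "Suc n" n] by (simp add: subleading_Suc[abs_def])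
qed

lemma ln_sqnorm_has_derivative:
  assumes z0: "z0 > 0"
  shows "((\<lambda>z. ln (sqnorm n z)) has_real_derivative (subleading n z0 - subleading (Suc n) z0) / z0) (at z0)"
  using DERIV_chain2[OF DERIV_ln_divide[OF sqnorm_pos[OF z0]] sqnorm_has_derivative[OF z0]]
  by (simp add: sqnorm_nonzero[OF z0])

lemma euler_op_ln_Delta_ratio:
  assumes z0: "z0 > 0"
  shows "euler_op (\<lambda>z. ln (Delta (Suc n) \<beta> z / Delta n \<beta> z)) z0 = subleading n z0 - subleading (Suc n) z0"
proof -
  have "euler_op (\<lambda>z. ln (Delta (Suc n) \<beta> z / Delta n \<beta> z)) z0
      = z0 * ((subleading n z0 - subleading (Suc n) z0) / z0)"
    by (rule euler_op_eqI[OF ln_sqnorm_has_derivative[OF z0], where S = "{0<..}"])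
      (use z0 in \<open>auto simp: Delta_Suc_div_Delta\<close>)
  thus ?thesis using z0 by simp
qed

lemma euler_op_ln_Delta:
  assumes z0: "z0 > 0"
  shows "euler_op (\<lambda>z. ln (Delta n \<beta> z)) z0 = - subleading n z0"
proof -
  have "euler_op (\<lambda>z. ln (Delta n \<beta> z)) z0
      = z0 * (\<Sum>i<n. (subleading i z0 - subleading (Suc i) z0) / z0)"
  proof (rule euler_op_eqI[OF DERIV_sum[OF ln_sqnorm_has_derivative[OF z0]], where S = "{0<..}"])
    fix z :: real assume "z \<in> {0<..}"
    hence z: "z > 0" by simp
    show "ln (Delta n \<beta> z) = (\<Sum>i<n. ln (sqnorm i z))"
      unfolding Delta_eq_prod_sqnorm[OF z] by (rule ln_prod) (simp_all add: sqnorm_nonzero[OF z])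
  qed (use z0 in auto)
  also have "\<dots> = (\<Sum>i<n. subleading i z0 - subleading (Suc i) z0)"
    using z0 by (simp add: sum_divide_distrib[symmetric])
  finally show ?thesis by (simp add: sum_lessThan_telescope'[of "\<lambda>i. subleading i z0"])
qed

lemma euler_op2_ln_Delta:
  assumes z0: "z0 > 0"
  shows "(euler_op ^^ 2) (\<lambda>z. ln (Delta (Suc n) \<beta> z)) z0 = sqnorm (Suc n) z0 / sqnorm n z0"
proof -
  have "(euler_op ^^ 2) (\<lambda>z. ln (Delta (Suc n) \<beta> z)) z0
      = euler_op (euler_op (\<lambda>z. ln (Delta (Suc n) \<beta> z))) z0"
    by (simp add: numeral_2_eq_2)
  also have "\<dots> = z0 * - (- sqnorm (Suc n) z0 / (z0 * sqnorm n z0))"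
    by (rule euler_op_eqI[OF DERIV_minus[OF subleading_has_derivative[OF z0]], where S = "{0<..}"])
      (use z0 euler_op_ln_Delta in auto)
  finally show ?thesis using z0 by simp
qed

end

locale charlier_jacobi_recurrence = charlier_orthonormal_system +
  fixes a b :: "real \<Rightarrow> nat \<Rightarrow> real"
  assumes rec0: "\<And>z. z > 0 \<Longrightarrow>
       [:0, 1:] * p z 0 = Polynomial.smult (a z 1) (p z 1) + Polynomial.smult (b z 0) (p z 0)"
    and rec: "\<And>z n. z > 0 \<Longrightarrow> n \<ge> 1 \<Longrightarrow>
       [:0, 1:] * p z n = Polynomial.smult (a z (n + 1)) (p z (n + 1)) + Polynomial.smult (b z n) (p z n)
                          + Polynomial.smult (a z n) (p z (n - 1))"
begin

lemma ip_x_p: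
  assumes z: "z > 0"
  shows "ip z ([:0, 1:] * p z n) (p z m)
    = (if m = Suc n then a z (Suc n) else 0) + (if m = n then b z n else 0) + (if Suc m = n then a z n else 0)"
proof (cases n)
  case 0
  thus ?thesis
    using rec0[OF z] by (simp add: charlier_inner_add[OF beta] charlier_inner_smult[OF beta] ip_p_p[OF z])
next
  case (Suc k)
  thus ?thesis
    using rec[OF z, of n]
    by (simp add: charlier_inner_add[OF beta] charlier_inner_smult[OF beta] ip_p_p[OF z])
qed

lemma b_eq_subleading:
  assumes z: "z > 0"
  shows "b z n = subleading n z - subleading (Suc n) z"
proof -
  have "b z n = charlier_inner \<beta> 1 z (p z n) (p z n)"
    unfolding charlier_inner_x using ip_x_p[OF z, of n n] by simp
  also have "\<dots> = (subleading n z - subleading (Suc n) z) * (lead_coeff (p z n) ^ 2 * sqnorm n z)"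
    using charlier_inner_x_monic_op_diag[OF z, of n]
    by (simp add: charlier_inner_p_p_eq_monic_op[OF z] power2_eq_square mult_ac)
  finally show ?thesis by (simp add: lead_coeff_sq_mult_sqnorm[OF z])
qed

lemma a_squared_eq_sqnorm_ratio:
  assumes z: "z > 0"
  shows "(a z (Suc n))\<^sup>2 = sqnorm (Suc n) z / sqnorm n z"
proof -
  have "a z (Suc n) = charlier_inner \<beta> 1 z (p z n) (p z (Suc n))"
    unfolding charlier_inner_x using ip_x_p[OF z, of n "Suc n"] by simp
  also have "\<dots> = lead_coeff (p z n) / lead_coeff (p z (Suc n))"
    using charlier_inner_x_monic_op_Suc[OF z, of n] p_nonzero[OF z, of "Suc n"]
    by (simp add: charlier_inner_p_p_eq_monic_op[OF z] sqnorm_def power2_eq_square field_simps)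
  finally show ?thesis
    using lead_coeff_p_pos[OF z, of n] by (simp add: sqnorm_def power_divide field_simps)
qed

end

theorem corollary4p3:
  fixes \<beta> z0 :: real
    and p :: "real \<Rightarrow> nat \<Rightarrow> real poly"
    and a b :: "real \<Rightarrow> nat \<Rightarrow> real"
  assumes beta: "\<beta> > -1"
    and z0: "z0 > 0"
    and deg: "\<And>z n. z > 0 \<Longrightarrow> degree (p z n) = n"
    and lead: "\<And>z n. z > 0 \<Longrightarrow> lead_coeff (p z n) > 0"
    and orth: "\<And>z m n. z > 0 \<Longrightarrow>
       (\<lambda>k. charlier_weight \<beta> z k * poly (p z m) (real k) * poly (p z n) (real k))
         sums (if m = n then 1 else 0)"
    and rec0: "\<And>z. z > 0 \<Longrightarrow>
       [:0, 1:] * p z 0 = Polynomial.smult (a z 1) (p z 1) + Polynomial.smult (b z 0) (p z 0)"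
    and rec: "\<And>z n. z > 0 \<Longrightarrow> n \<ge> 1 \<Longrightarrow>
       [:0, 1:] * p z n = Polynomial.smult (a z (n + 1)) (p z (n + 1)) + Polynomial.smult (b z n) (p z n)
                          + Polynomial.smult (a z n) (p z (n - 1))"
  shows "(\<forall>n\<ge>1. (a z0 n)\<^sup>2 = (euler_op ^^ 2) (\<lambda>z. ln (Delta n \<beta> z)) z0)
       \<and> (\<forall>n. b z0 n = euler_op (\<lambda>z. ln (Delta (n + 1) \<beta> z / Delta n \<beta> z)) z0)"
proof -
  interpret charlier_jacobi_recurrence \<beta> p a b
    using beta deg lead orth rec0 rec by unfold_locales auto
  have "(a z0 n)\<^sup>2 = (euler_op ^^ 2) (\<lambda>z. ln (Delta n \<beta> z)) z0" if "n \<ge> 1" for n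
    using that z0 a_squared_eq_sqnorm_ratio[of z0 "n - 1"] euler_op2_ln_Delta[of z0 "n - 1"] by simp
  moreover have "b z0 n = euler_op (\<lambda>z. ln (Delta (n + 1) \<beta> z / Delta n \<beta> z)) z0" for n
    using z0 b_eq_subleading euler_op_ln_Delta_ratio by simp
  ultimately show ?thesis by blast
qed

end
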